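(* There exist absolute constants $c>0$ and $k_0$ such that for all integers $k\ge k_0$, all $\varepsilon\in(0,1)$ and all $\delta\in(0,1/4)$, the $(\varepsilon,\delta)$-sample complexity of estimating the Shannon entropy $H(\vec p)=\sum_{i=1}^k p_i\log\frac1{p_i}$ over $\Delta_k$ satisfies \[ C_H(\varepsilon,\delta)\ge c\,\log\frac1\delta\cdot\frac{\log^2 k}{\varepsilon^2}. \]
   Context: $\Delta_k$ is the set of probability distributions $\vec p=(p_1,\dots,p_k)$ on $[k]=\{1,\dots,k\}$; $\log$ is the natural logarithm. An estimator is any map $\hat f:[k]^*\to\mathbb{R}$ from finite sequences over $[k]$. For a property $f:\Delta_k\to\mathbb{R}$, the $(\varepsilon,\delta)$-sample complexity is \[ C_f(\varepsilon,\delta):=\min_{\hat f}\min\{n:\ \Pr_{X^n\sim\vec p}(|\hat f(X^n)-f(\vec p)|>\varepsilon)\le\delta\ \ \forall\vec p\in\Delta_k\}, \] where $X^n$ denotes $n$ i.i.d. samples from $\vec p$. *)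

theory Defs
  imports Complex_Main "HOL-Library.Extended_Real"
begin

text \<open>Probability simplex on [k] = {1..k}; values of p outside {1..k} are irrelevant.\<close>
definition simplex :: "nat \<Rightarrow> (nat \<Rightarrow> real) set" where
  "simplex k = {p. (\<forall>i\<in>{1..k}. 0 \<le> p i) \<and> (\<Sum>i=1..k. p i) = 1}"

text \<open>Shannon entropy (natural log); for p i = 0 the term is 0 * ln(1/0) = 0.\<close>
definition shannon_entropy :: "nat \<Rightarrow> (nat \<Rightarrow> real) \<Rightarrow> real" where
  "shannon_entropy k p = (\<Sum>i=1..k. p i * ln (1 / p i))"

definition seqs :: "nat \<Rightarrow> nat \<Rightarrow> nat list set" where
  "seqs k n = {xs. length xs = n \<and> set xs \<subseteq> {1..k}}"

definition iid_prob :: "nat \<Rightarrow> (nat \<Rightarrow> real) \<Rightarrow> nat \<Rightarrow> (nat list \<Rightarrow> bool) \<Rightarrow> real" where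
  "iid_prob k p n A = (\<Sum>xs\<in>{xs\<in>seqs k n. A xs}. \<Prod>j<n. p (xs ! j))"

definition estimates_with :: "nat \<Rightarrow> ((nat \<Rightarrow> real) \<Rightarrow> real) \<Rightarrow> (nat list \<Rightarrow> real)
    \<Rightarrow> real \<Rightarrow> real \<Rightarrow> nat \<Rightarrow> bool" where
  "estimates_with k f fh eps delta n \<longleftrightarrow>
     (\<forall>p\<in>simplex k. iid_prob k p n (\<lambda>xs. \<bar>fh xs - f p\<bar> > eps) \<le> delta)"

text \<open>(eps,delta)-sample complexity: min over estimators of the least successful n
  (equivalently the least n for which some estimator succeeds); +\<infinity> if none exists.\<close>
definition sample_complexity :: "nat \<Rightarrow> ((nat \<Rightarrow> real) \<Rightarrow> real) \<Rightarrow> real \<Rightarrow> real \<Rightarrow> ereal" where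
  "sample_complexity k f eps delta =
     Inf {ereal (real n) | n. \<exists>fh. estimates_with k f fh eps delta n}"

end

theory Submission
  imports Defs "HOL-Analysis.Convex"
begin

text \<open>Le Cam's two-point method. Let \<open>K = k - 1\<close>, \<open>L = ln K\<close>, \<open>t = 2\<epsilon>/L\<close>, and let \<open>p\<close>, \<open>q\<close>
  put mass \<open>1/2 + t\<close>, resp. \<open>1/2 - t\<close>, on the symbol 1 and spread the rest uniformly over the
  other \<open>K\<close> symbols. Their entropies differ by \<open>2tL = 4\<epsilon>\<close>, so an \<open>(\<epsilon>,\<delta>)\<close>-estimator distinguishes
  \<open>p\<^sup>n\<close> from \<open>q\<^sup>n\<close> with error at most \<open>\<delta>\<close> on each side; the overlap \<open>\<Sum> min(p\<^sup>n, q\<^sup>n)\<close> is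
  therefore at most \<open>2\<delta>\<close>. The Bhattacharyya coefficient of \<open>p\<close> and \<open>q\<close> is \<open>\<surd>(1 - 4t\<^sup>2)\<close>, it is
  multiplicative under products, and by Cauchy-Schwarz it controls the overlap:
  \<open>(1 - 4t\<^sup>2)\<^sup>n \<le> 4\<delta>(1 - \<delta>)\<close>. Taking logarithms gives \<open>n \<ge> c \<cdot> ln(1/\<delta>) L\<^sup>2/\<epsilon>\<^sup>2\<close>.\<close>

lemma seqs_Suc: "seqs k (Suc n) = (\<lambda>(x, xs). x # xs) ` ({1..k} \<times> seqs k n)"
proof (rule set_eqI)
  fix ys
  show "ys \<in> seqs k (Suc n) \<longleftrightarrow> ys \<in> (\<lambda>(x, xs). x # xs) ` ({1..k} \<times> seqs k n)"
    by (cases ys) (auto simp: seqs_def)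
qed

lemma finite_seqs: "finite (seqs k n)"
  by (induction n) (auto simp: seqs_Suc, simp add: seqs_def)

lemma sum_seqs_prod:
  fixes f :: "nat \<Rightarrow> real"
  shows "(\<Sum>xs\<in>seqs k n. \<Prod>j<n. f (xs ! j)) = (\<Sum>i=1..k. f i) ^ n"
proof (induction n)
  case 0
  have "seqs k 0 = {[]}" by (auto simp: seqs_def)
  then show ?case by simp
next
  case (Suc n)
  have inj: "inj_on (\<lambda>(x, xs). x # xs) ({1..k} \<times> seqs k n)" by (auto simp: inj_on_def)
  have "(\<Sum>xs\<in>seqs k (Suc n). \<Prod>j<Suc n. f (xs ! j))
      = (\<Sum>(x, xs)\<in>{1..k} \<times> seqs k n. \<Prod>j<Suc n. f ((x # xs) ! j))"
    unfolding seqs_Suc by (subst sum.reindex[OF inj]) (simp add: case_prod_unfold)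
  also have "\<dots> = (\<Sum>(x, xs)\<in>{1..k} \<times> seqs k n. f x * (\<Prod>j<n. f (xs ! j)))"
    by (intro sum.cong refl) (auto simp: prod.lessThan_Suc_shift simp del: prod.lessThan_Suc)
  also have "\<dots> = (\<Sum>x\<in>{1..k}. \<Sum>xs\<in>seqs k n. f x * (\<Prod>j<n. f (xs ! j)))"
    by (rule sum.cartesian_product[symmetric])
  also have "\<dots> = (\<Sum>x\<in>{1..k}. f x) * (\<Sum>xs\<in>seqs k n. \<Prod>j<n. f (xs ! j))"
    by (simp add: sum_product)
  finally show ?case using Suc by simp
qed

lemma iid_prob_eq_sum_if:
  "iid_prob k p n A = (\<Sum>xs\<in>seqs k n. if A xs then \<Prod>j<n. p (xs ! j) else 0)"
  unfolding iid_prob_def using finite_seqs by (simp add: sum.inter_filter)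

lemma real_sqrt_prod: "sqrt (\<Prod>j\<in>A. f j) = (\<Prod>j\<in>A. sqrt (f j))"
  by (induction A rule: infinite_finite_induct) (auto simp: real_sqrt_mult)

lemma bhattacharyya_sq_le_overlap:
  fixes P Q :: "'a \<Rightarrow> real"
  assumes "finite S" "\<And>x. x \<in> S \<Longrightarrow> P x \<ge> 0" "\<And>x. x \<in> S \<Longrightarrow> Q x \<ge> 0"
    and "sum P S = 1" "sum Q S = 1"
  shows "(\<Sum>x\<in>S. sqrt (P x * Q x))^2 \<le> 1 - (1 - (\<Sum>x\<in>S. min (P x) (Q x)))^2"
proof -
  have split: "sqrt (P x * Q x) = sqrt (min (P x) (Q x)) * sqrt (max (P x) (Q x))" for x
    by (cases "P x \<le> Q x") (simp_all add: min_def max_def real_sqrt_mult[symmetric] mult.commute)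
  have "(\<Sum>x\<in>S. sqrt (P x * Q x))^2
      \<le> (\<Sum>x\<in>S. (sqrt (min (P x) (Q x)))^2) * (\<Sum>x\<in>S. (sqrt (max (P x) (Q x)))^2)"
    unfolding split by (rule Cauchy_Schwarz_ineq_sum)
  also have "\<dots> = (\<Sum>x\<in>S. min (P x) (Q x)) * (\<Sum>x\<in>S. max (P x) (Q x))"
    using assms(2,3) by (intro arg_cong2[where f="(*)"] sum.cong refl) (auto simp: le_max_iff_disj)
  also have "(\<Sum>x\<in>S. max (P x) (Q x)) = (\<Sum>x\<in>S. P x + Q x - min (P x) (Q x))"
    by (intro sum.cong refl) (simp add: max_def min_def)
  also have "\<dots> = 2 - (\<Sum>x\<in>S. min (P x) (Q x))"
    using assms(4,5) by (simp add: sum_subtractf sum.distrib)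
  finally show ?thesis by (simp add: power2_eq_square algebra_simps)
qed

lemma two_point_lower_bound:
  assumes est: "estimates_with k f fh eps d n"
    and p: "p \<in> simplex k" and q: "q \<in> simplex k"
    and gap: "\<bar>f q - f p\<bar> > 2 * eps" and d: "0 \<le> d" "d \<le> 1/2"
  shows "((\<Sum>i=1..k. sqrt (p i * q i)) ^ n)^2 \<le> 4 * d * (1 - d)"
proof -
  define S where "S = seqs k n"
  define P where "P = (\<lambda>xs. \<Prod>j<n. p (xs ! j))"
  define Q where "Q = (\<lambda>xs. \<Prod>j<n. q (xs ! j))"
  have P0: "P xs \<ge> 0" if "xs \<in> S" for xs
    using p that unfolding P_def S_def simplex_def seqs_def
    by (force intro!: prod_nonneg dest: nth_mem)
  have Q0: "Q xs \<ge> 0" if "xs \<in> S" for xs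
    using q that unfolding Q_def S_def simplex_def seqs_def
    by (force intro!: prod_nonneg dest: nth_mem)
  have sum_P: "sum P S = 1" and sum_Q: "sum Q S = 1"
    using p q unfolding P_def Q_def S_def sum_seqs_prod simplex_def by simp_all
  have bc_product: "(\<Sum>xs\<in>S. sqrt (P xs * Q xs)) = (\<Sum>i=1..k. sqrt (p i * q i)) ^ n"
    using sum_seqs_prod[where f="\<lambda>i. sqrt (p i * q i)" and k=k and n=n] unfolding P_def Q_def S_def
    by (simp add: prod.distrib[symmetric] real_sqrt_prod)
  define E1 where "E1 = (\<lambda>xs. \<bar>fh xs - f p\<bar> > eps)"
  define E2 where "E2 = (\<lambda>xs. \<bar>fh xs - f q\<bar> > eps)"
  have "(\<Sum>xs\<in>S. min (P xs) (Q xs))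
      \<le> (\<Sum>xs\<in>S. (if E1 xs then P xs else 0) + (if E2 xs then Q xs else 0))"
  proof (intro sum_mono)
    fix xs assume "xs \<in> S"
    have "E1 xs \<or> E2 xs" using gap unfolding E1_def E2_def by linarith
    then show "min (P xs) (Q xs) \<le> (if E1 xs then P xs else 0) + (if E2 xs then Q xs else 0)"
      using P0[OF \<open>xs \<in> S\<close>] Q0[OF \<open>xs \<in> S\<close>] by auto
  qed
  also have "\<dots> = iid_prob k p n E1 + iid_prob k q n E2"
    unfolding iid_prob_eq_sum_if sum.distrib P_def Q_def S_def ..
  also have "\<dots> \<le> d + d"
    using est p q unfolding estimates_with_def E1_def E2_def by (intro add_mono) blast+
  finally have overlap: "(\<Sum>xs\<in>S. min (P xs) (Q xs)) \<le> 2 * d" by simp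
  have "(1 - 2 * d)^2 \<le> (1 - (\<Sum>xs\<in>S. min (P xs) (Q xs)))^2"
    using overlap d by (intro power_mono) auto
  moreover have "((\<Sum>i=1..k. sqrt (p i * q i)) ^ n)^2 \<le> 1 - (1 - (\<Sum>xs\<in>S. min (P xs) (Q xs)))^2"
    unfolding bc_product[symmetric] S_def
    by (rule bhattacharyya_sq_le_overlap[OF finite_seqs])
       (use P0 Q0 sum_P sum_Q in \<open>simp_all add: S_def\<close>)
  ultimately show ?thesis by (simp add: power2_eq_square algebra_simps)
qed

definition spike :: "nat \<Rightarrow> real \<Rightarrow> nat \<Rightarrow> real" where
  "spike k a i = (if i = 1 then a else (1 - a) / (real k - 1))"

lemma sum_if_first:
  fixes a b :: real
  assumes "k \<ge> 1"
  shows "(\<Sum>i=1..k. if i = 1 then a else b) = a + (real k - 1) * b"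
proof -
  have "(\<Sum>i=1..k. if i = 1 then a else b) = a + (\<Sum>i=Suc 1..k. if i = 1 then a else b)"
    using assms by (subst sum.atLeast_Suc_atMost) auto
  also have "(\<Sum>i=Suc 1..k. if i = 1 then a else b) = (\<Sum>i=Suc 1..k. b)"
    by (intro sum.cong) auto
  finally show ?thesis using assms by (simp add: of_nat_diff)
qed

lemma spike_in_simplex:
  assumes "k \<ge> 2" "0 \<le> a" "a \<le> 1"
  shows "spike k a \<in> simplex k"
proof -
  have "real k - 1 > 0" using assms by simp
  then show ?thesis
    using assms sum_if_first[of k a] unfolding simplex_def spike_def by auto
qed

lemma entropy_spike:
  assumes "k \<ge> 2" "0 < a" "a < 1"
  shows "shannon_entropy k (spike k a) = a * ln (1 / a) + (1 - a) * ln ((real k - 1) / (1 - a))"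
proof -
  have K: "real k - 1 > 0" using assms by simp
  have "shannon_entropy k (spike k a)
      = (\<Sum>i=1..k. if i = 1 then a * ln (1 / a) else (1 - a) / (real k - 1) * ln ((real k - 1) / (1 - a)))"
    unfolding shannon_entropy_def spike_def by (intro sum.cong) auto
  also have "\<dots> = a * ln (1 / a) + (1 - a) * ln ((real k - 1) / (1 - a))"
    using assms K by (subst sum_if_first) simp_all
  finally show ?thesis .
qed

lemma entropy_spike_gap:
  assumes "k \<ge> 2" "0 < a" "a < 1"
  shows "shannon_entropy k (spike k (1 - a)) - shannon_entropy k (spike k a)
       = (2 * a - 1) * ln (real k - 1)"
proof -
  have K: "real k - 1 > 0" using assms by simp
  show ?thesis
    using assms K by (simp add: entropy_spike ln_div algebra_simps)
qed

lemma bhattacharyya_spike: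
  assumes "k \<ge> 2" "0 \<le> a" "a \<le> 1"
  shows "(\<Sum>i=1..k. sqrt (spike k a i * spike k (1 - a) i)) = 2 * sqrt (a * (1 - a))"
proof -
  define K where "K = real k - 1"
  have K: "K > 0" using assms unfolding K_def by simp
  have "sqrt ((1 - a) / K * (a / K)) = sqrt (a * (1 - a)) / K"
    using K by (simp add: real_sqrt_divide real_sqrt_mult mult.commute)
  then have "(\<Sum>i=1..k. sqrt (spike k a i * spike k (1 - a) i))
      = (\<Sum>i=1..k. if i = 1 then sqrt (a * (1 - a)) else sqrt (a * (1 - a)) / K)"
    unfolding spike_def K_def[symmetric] by (intro sum.cong) (auto simp: mult.commute)
  also have "\<dots> = sqrt (a * (1 - a)) + K * (sqrt (a * (1 - a)) / K)"
    using assms by (subst sum_if_first) (simp_all add: K_def)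
  also have "\<dots> = 2 * sqrt (a * (1 - a))"
    using K by simp
  finally show ?thesis .
qed

lemma ln_inv_le_neg_ln_4d:
  fixes d :: real
  assumes "0 < d" "d < 1/4"
  shows "ln (1 / d) / 16 \<le> - ln (4 * d * (1 - d))"
proof (cases "d \<le> 1/16")
  case True
  have "ln (4 * d * (1 - d)) \<le> ln (4 * d)"
    using assms by (intro ln_mono) auto
  moreover have "ln (4 * d) = ln 4 + ln d" using assms by (simp add: ln_mult)
  moreover have "ln (1 / d) = - ln d" using assms by (simp add: ln_div)
  moreover have "ln 16 \<le> ln (1 / d)" using assms True by (intro ln_mono) (auto simp: field_simps)
  moreover have "ln (16::real) = 2 * ln 4" using ln_realpow[of 4 2] by simp
  moreover have "ln (4::real) > 0" by simp
  ultimately show ?thesis by linarith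
next
  case False
  have "0 \<le> (1/2 - 2 * d) * (3/2 - 2 * d)" using assms by (intro mult_nonneg_nonneg) auto
  then have "4 * d * (1 - d) \<le> 3/4" by (simp add: algebra_simps)
  then have "ln (4 * d * (1 - d)) \<le> ln (3/4)" using assms by (intro ln_mono) auto
  moreover have "ln (3/4::real) = - ln (4/3)" by (simp add: ln_div)
  moreover have "ln (1 / d) \<le> ln 16" using assms False by (intro ln_mono) (auto simp: field_simps)
  moreover have "ln (16::real) \<le> 16 * ln (4/3)"
  proof -
    have "ln (2::real) \<le> ln ((4/3)^4)" by (intro ln_mono) (auto simp: power_divide)
    moreover have "ln ((4/3)^4 :: real) = 4 * ln (4/3)" by (simp add: ln_realpow)
    moreover have "ln (16::real) = 4 * ln 2" using ln_realpow[of 2 4] by simp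
    ultimately show ?thesis by linarith
  qed
  ultimately show ?thesis by linarith
qed

lemma neg_ln_le_of_power_one_minus_le:
  fixes x y :: real
  assumes "0 < x" "x \<le> 1/2" "0 < y" "(1 - x) ^ n \<le> y"
  shows "- ln y \<le> 2 * x * real n"
proof -
  have "real n * ln (1 - x) = ln ((1 - x) ^ n)" using assms by (simp add: ln_realpow)
  also have "\<dots> \<le> ln y" using assms by (intro ln_mono) auto
  finally have "real n * ln (1 - x) \<le> ln y" .
  moreover have "- x - 2 * x^2 \<le> ln (1 - x)" using assms by (intro ln_one_minus_pos_lower_bound) auto
  moreover have "2 * x^2 \<le> x" using assms by (simp add: power2_eq_square)
  ultimately have "real n * (- 2 * x) \<le> ln y"
    by (smt (verit, best) mult_left_mono of_nat_0_le_iff)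
  then show ?thesis by (simp add: algebra_simps)
qed

lemma ln_le_two_ln_pred:
  assumes "k \<ge> 3"
  shows "ln (real k) \<le> 2 * ln (real k - 1)"
proof -
  have "0 \<le> real k * (real k - 3)" using assms by simp
  then have "real k \<le> (real k - 1)^2" by (simp add: power2_eq_square algebra_simps)
  then have "ln (real k) \<le> ln ((real k - 1)^2)" using assms by (intro ln_mono) auto
  then show ?thesis using assms by (simp add: ln_realpow)
qed

lemma entropy_estimation_sample_bound:
  assumes k: "k \<ge> 1000" and eps: "0 < eps" "eps < 1" and d: "0 < d" "d < 1/4"
    and est: "estimates_with k (shannon_entropy k) fh eps d n"
  shows "1/2048 * ln (1 / d) * (ln (real k))^2 / eps^2 \<le> real n"
proof -
  define L where "L = ln (real k - 1)"
  have "exp 6 \<le> (3::real) ^ 6"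
    using exp_of_nat_mult[of 6 "1::real"] power_mono[OF exp_le, of 6] by simp
  then have "exp 6 \<le> real k - 1" using k by simp
  then have L6: "6 \<le> L" unfolding L_def using k by (subst ln_ge_iff) auto
  define t where "t = 2 * eps / L"
  have t: "0 < t" "t \<le> 1/3" using eps L6 unfolding t_def by (auto simp: field_simps)
  define p where "p = spike k (1/2 + t)"
  define q where "q = spike k (1/2 - t)"
  have flip: "1 - (1/2 + t) = 1/2 - t" by simp
  have k2: "k \<ge> 2" using k by simp
  have pq: "p \<in> simplex k" "q \<in> simplex k"
    unfolding p_def q_def using t by (auto intro!: spike_in_simplex[OF k2])
  have "shannon_entropy k q - shannon_entropy k p = 2 * t * L"
    using entropy_spike_gap[OF k2, of "1/2 + t", unfolded flip] t unfolding p_def q_def L_def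
    by (simp add: algebra_simps)
  also have "\<dots> = 4 * eps" unfolding t_def using L6 by simp
  finally have gap: "\<bar>shannon_entropy k q - shannon_entropy k p\<bar> > 2 * eps" using eps by simp
  have "t * t \<le> 1/3 * (1/3)" using t by (intro mult_mono) auto
  then have "(\<Sum>i=1..k. sqrt (p i * q i))^2 = 1 - 4 * t^2"
    using bhattacharyya_spike[OF k2, of "1/2 + t", unfolded flip] t unfolding p_def q_def
    by (simp add: power_mult_distrib algebra_simps power2_eq_square)
  then have "(1 - 4 * t^2) ^ n = ((\<Sum>i=1..k. sqrt (p i * q i)) ^ n)^2"
    by (metis power_mult mult.commute)
  also have "\<dots> \<le> 4 * d * (1 - d)"
    using two_point_lower_bound[OF est pq gap] d by simp
  finally have "(1 - 4 * t^2) ^ n \<le> 4 * d * (1 - d)" .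
  moreover have "4 * t^2 \<le> 1/2"
    using power_mono[OF t(2), of 2] t by (simp add: power_divide)
  ultimately have "- ln (4 * d * (1 - d)) \<le> 2 * (4 * t^2) * real n"
    using t d by (intro neg_ln_le_of_power_one_minus_le) auto
  then have "ln (1 / d) / 16 \<le> 32 * eps^2 * real n / L^2"
    using ln_inv_le_neg_ln_4d[OF d] unfolding t_def by (simp add: power_divide power_mult_distrib)
  then have bound_L: "ln (1 / d) * L^2 \<le> 512 * eps^2 * real n"
    using L6 by (simp add: field_simps)
  have "(ln (real k))^2 \<le> 4 * L^2"
    using ln_le_two_ln_pred[of k] k power_mono[of "ln (real k)" "2 * L" 2]
    unfolding L_def by (simp add: power_mult_distrib)
  then have "ln (1 / d) * (ln (real k))^2 \<le> ln (1 / d) * (4 * L^2)"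
    using d by (intro mult_left_mono) auto
  then have "ln (1 / d) * (ln (real k))^2 \<le> 2048 * eps^2 * real n"
    using bound_L by linarith
  then show ?thesis using eps by (simp add: field_simps)
qed

theorem theorem2:
  shows "\<exists>c::real. c > 0 \<and> (\<exists>k0::nat. \<forall>k\<ge>k0. \<forall>eps delta::real.
           0 < eps \<and> eps < 1 \<and> 0 < delta \<and> delta < 1/4 \<longrightarrow>
           sample_complexity k (shannon_entropy k) eps delta
             \<ge> ereal (c * ln (1 / delta) * (ln (real k))^2 / eps^2))"
proof (intro exI conjI allI impI)
  fix k :: nat and eps delta :: real
  assume k: "1000 \<le> k" and h: "0 < eps \<and> eps < 1 \<and> 0 < delta \<and> delta < 1/4"
  show "ereal (1/2048 * ln (1 / delta) * (ln (real k))^2 / eps^2)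
        \<le> sample_complexity k (shannon_entropy k) eps delta"
    unfolding sample_complexity_def
  proof (rule Inf_greatest, clarify)
    fix n fh assume "estimates_with k (shannon_entropy k) fh eps delta n"
    then have "1/2048 * ln (1 / delta) * (ln (real k))^2 / eps^2 \<le> real n"
      using entropy_estimation_sample_bound[OF k] h by blast
    then show "ereal (1/2048 * ln (1 / delta) * (ln (real k))^2 / eps^2) \<le> ereal (real n)"
      by simp
  qed
qed simp

end
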